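(* Assume the setting described in the context and fix a permutation $\pi$ of $F$. Suppose that either (1) there are vectors $\lambda,\mu\in\mathbb{R}^F$ with $\mu_f\neq0$ and a constant $\theta\in(0,1)$ such that $\frac{\lambda_f}{\mu_f}\sum_{S\in\mathrm{Ind}(\Gamma(f))}\mu(S)\le\theta$ for all $f\in F$, where $\mu(S)=\prod_{g\in S}\mu_g$; or (2) $(\rho,\sim)$ satisfies Shearer's condition with vectors $p,\lambda$ and constant $\theta$, in which case we set $\mu(R)=q_R(p)/q_\varnothing(p)$. Then for every $R\in\mathrm{Ind}(F)$ and every integer $t\ge0$, $$\sum_{W\in\mathrm{Stab}_\pi(R,t)}\lambda_W\le\mu(R)\,\theta^t.$$
   Context: Setting: $\Omega$ is a finite set and $F$ a finite set of flaws, each a nonempty subset of $\Omega$; $F_\sigma=\{f:\sigma\in f\}$. For $\sigma\in\Omega$ and $f\in F_\sigma$ there is a probability distribution $\rho(\cdot\mid f,\sigma)$ on $\Omega$ with support $A(f,\sigma)$. A distribution $\omega$ on $\Omega$ has $\omega(\sigma)>0$ for all $\sigma$. A walk is a sequence $\sigma_1\xrightarrow{w_1}\sigma_2\cdots\xrightarrow{w_t}\sigma_{t+1}$ with $w_i\in F_{\sigma_i}$ and $\sigma_{i+1}\in A(w_i,\sigma_i)$; its word is $w_1\ldots w_t$. $\sim$ is a fixed symmetric relation on $F$ (loops allowed), with $\Gamma(f)=\{g:f\sim g\}$, $\Gamma^+(f)=\Gamma(f)\cup\{f\}$ and $\Gamma^+(S)=\bigcup_{f\in S}\Gamma^+(f)$.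 It is assumed that for every step $\sigma\xrightarrow{f}\sigma'$ of a walk, $F_{\sigma'}\subseteq(F_\sigma\setminus\{f\})\cup\Gamma(f)$. A set $S$ is independent if $f\not\sim g$ for distinct $f,g\in S$; $\mathrm{Ind}(S)$ is the family of independent subsets of $S$. A word is a finite sequence of flaws; for $W=w_1\ldots w_t$ let $|W|=t$, $\lambda_W=\prod_i\lambda_{w_i}$ and $\mathrm{REV}[W]=w_t\ldots w_1$. A sequence of sets $(I_1,\ldots,I_s)$ with $s\ge1$ is stable if each $I_r\in\mathrm{Ind}(F)$ and $I_{r+1}\subseteq\Gamma^+(I_r)$ for $r\in[s-1]$. A word $W$ is stable if it can be partitioned as $W=W_1\ldots W_s$ into nonempty words such that the flaws within each $W_r$ are distinct and $(I_1,\ldots,I_s)$ is stable, where $I_r$ is the set of flaws in $W_r$; such a partition is unique. Let $\preceq_\pi$ be the total order on $F$ given by $\pi$. $W$ is $\pi$-stable if, moreover, the flaws in each $W_r$ appear in strictly $\prec_\pi$-increasing order. For a stable word $W$ let $R_W=I_1$, and let $R_W=\varnothing$ if $W$ is empty. $\mathrm{Stab}_\pi$ is the set of $\pi$-stable words $W$ such that some walk has word $W$ or $\mathrm{REV}[W]$, and $\mathrm{Stab}_\pi(R,t)=\{W\in\mathrm{Stab}_\pi:R_W=R,\ |W|\ge t\}$. Shearer's condition: $q_S(p)=\sum_{I:S\subseteq I\in\mathrm{Ind}(F)}(-1)^{|I|-|S|}\prod_{f\in I}p_f$. One requires $q_S(p)\ge0$ for all $S$ and $q_\varnothing(p)>0$,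 together with a vector $\lambda$ satisfying $\lambda_f\ge\sum_{\sigma\in f:\sigma'\in A(f,\sigma)}\rho(\sigma'\mid f,\sigma)\omega(\sigma)/\omega(\sigma')$ for all $f,\sigma'$, a constant $\theta\in(0,1)$, and $\lambda_f\le\theta p_f$ for all $f$. *)

theory Defs
  imports "HOL-Analysis.Analysis"
begin

(* Flaws are subsets of Omega, so a flaw has type 'a set; F :: 'a set set.
   rho f s s' = rho(s' | f, s);  adj is the symmetric relation ~ on F. *)

definition Fs :: "'a set set \<Rightarrow> 'a \<Rightarrow> 'a set set" where
  "Fs F s = {f \<in> F. s \<in> f}"

definition Asupp :: "'a set \<Rightarrow> ('a set \<Rightarrow> 'a \<Rightarrow> 'a \<Rightarrow> real) \<Rightarrow> 'a set \<Rightarrow> 'a \<Rightarrow> 'a set" where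
  "Asupp Omega rho f s = {s' \<in> Omega. rho f s s' > 0}"

definition Gam :: "'a set set \<Rightarrow> ('a set \<Rightarrow> 'a set \<Rightarrow> bool) \<Rightarrow> 'a set \<Rightarrow> 'a set set" where
  "Gam F adj f = {g \<in> F. adj f g}"

definition GamP :: "'a set set \<Rightarrow> ('a set \<Rightarrow> 'a set \<Rightarrow> bool) \<Rightarrow> 'a set set \<Rightarrow> 'a set set" where
  "GamP F adj S = (\<Union>f\<in>S. insert f (Gam F adj f))"

definition indep :: "('a set \<Rightarrow> 'a set \<Rightarrow> bool) \<Rightarrow> 'a set set \<Rightarrow> bool" where
  "indep adj S = (\<forall>f\<in>S. \<forall>g\<in>S. f \<noteq> g \<longrightarrow> \<not> adj f g)"

definition IndS :: "('a set \<Rightarrow> 'a set \<Rightarrow> bool) \<Rightarrow> 'a set set \<Rightarrow> 'a set set set" where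
  "IndS adj S = {I. I \<subseteq> S \<and> indep adj I}"

definition setting :: "'a set \<Rightarrow> 'a set set \<Rightarrow> ('a set \<Rightarrow> 'a \<Rightarrow> 'a \<Rightarrow> real)
    \<Rightarrow> ('a \<Rightarrow> real) \<Rightarrow> ('a set \<Rightarrow> 'a set \<Rightarrow> bool) \<Rightarrow> bool" where
  "setting Omega F rho omega adj \<longleftrightarrow>
     finite Omega \<and> finite F \<and>
     (\<forall>f\<in>F. f \<noteq> {} \<and> f \<subseteq> Omega) \<and>
     (\<forall>s\<in>Omega. \<forall>f\<in>F. s \<in> f \<longrightarrow>
         (\<forall>s'\<in>Omega. rho f s s' \<ge> 0) \<and> (\<Sum>s'\<in>Omega. rho f s s') = 1) \<and>
     (\<forall>s\<in>Omega. omega s > 0) \<and> (\<Sum>s\<in>Omega. omega s) = 1 \<and>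
     (\<forall>f\<in>F. \<forall>g\<in>F. adj f g \<longrightarrow> adj g f) \<and>
     (\<forall>s\<in>Omega. \<forall>f\<in>F. s \<in> f \<longrightarrow>
         (\<forall>s'\<in>Asupp Omega rho f s. Fs F s' \<subseteq> (Fs F s - {f}) \<union> Gam F adj f))"

(* walk with states ss = [s_1,...,s_{t+1}] and word ws = [w_1,...,w_t] *)
definition walk :: "'a set \<Rightarrow> 'a set set \<Rightarrow> ('a set \<Rightarrow> 'a \<Rightarrow> 'a \<Rightarrow> real)
    \<Rightarrow> 'a list \<Rightarrow> 'a set list \<Rightarrow> bool" where
  "walk Omega F rho ss ws \<longleftrightarrow>
     length ss = Suc (length ws) \<and> ss ! 0 \<in> Omega \<and>
     (\<forall>i < length ws. ws ! i \<in> F \<and> ss ! i \<in> ws ! i \<and>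
        ss ! Suc i \<in> Asupp Omega rho (ws ! i) (ss ! i))"

definition stable_partition :: "'a set set \<Rightarrow> ('a set \<Rightarrow> 'a set \<Rightarrow> bool) \<Rightarrow> 'a set list list \<Rightarrow> bool" where
  "stable_partition F adj Ws \<longleftrightarrow>
     Ws \<noteq> [] \<and>
     (\<forall>w\<in>set Ws. w \<noteq> [] \<and> distinct w \<and> set w \<in> IndS adj F) \<and>
     (\<forall>r. Suc r < length Ws \<longrightarrow> set (Ws ! Suc r) \<subseteq> GamP F adj (set (Ws ! r)))"

(* perm is a bijection F -> {0..<|F|}; f \<prec>_pi g iff perm f < perm g *)
definition pi_stable_word :: "'a set set \<Rightarrow> ('a set \<Rightarrow> 'a set \<Rightarrow> bool) \<Rightarrow> ('a set \<Rightarrow> nat)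
    \<Rightarrow> 'a set list \<Rightarrow> bool" where
  "pi_stable_word F adj perm W \<longleftrightarrow>
     W = [] \<or>
     (\<exists>Ws. stable_partition F adj Ws \<and> concat Ws = W \<and>
        (\<forall>w\<in>set Ws. sorted_wrt (\<lambda>f g. perm f < perm g) w))"

definition RW :: "'a set set \<Rightarrow> ('a set \<Rightarrow> 'a set \<Rightarrow> bool) \<Rightarrow> 'a set list \<Rightarrow> 'a set set" where
  "RW F adj W = (if W = [] then {}
      else set (hd (THE Ws. stable_partition F adj Ws \<and> concat Ws = W)))"

definition Stab :: "'a set \<Rightarrow> 'a set set \<Rightarrow> ('a set \<Rightarrow> 'a \<Rightarrow> 'a \<Rightarrow> real)
    \<Rightarrow> ('a set \<Rightarrow> 'a set \<Rightarrow> bool) \<Rightarrow> ('a set \<Rightarrow> nat) \<Rightarrow> 'a set list set" where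
  "Stab Omega F rho adj perm = {W. pi_stable_word F adj perm W \<and>
      (\<exists>ss. walk Omega F rho ss W \<or> walk Omega F rho ss (rev W))}"

definition StabRt :: "'a set \<Rightarrow> 'a set set \<Rightarrow> ('a set \<Rightarrow> 'a \<Rightarrow> 'a \<Rightarrow> real)
    \<Rightarrow> ('a set \<Rightarrow> 'a set \<Rightarrow> bool) \<Rightarrow> ('a set \<Rightarrow> nat) \<Rightarrow> 'a set set \<Rightarrow> nat \<Rightarrow> 'a set list set" where
  "StabRt Omega F rho adj perm R t =
     {W \<in> Stab Omega F rho adj perm. RW F adj W = R \<and> length W \<ge> t}"

definition lamW :: "('a set \<Rightarrow> real) \<Rightarrow> 'a set list \<Rightarrow> real" where
  "lamW lam W = prod_list (map lam W)"

definition qS :: "'a set set \<Rightarrow> ('a set \<Rightarrow> 'a set \<Rightarrow> bool) \<Rightarrow> ('a set \<Rightarrow> real) \<Rightarrow> 'a set set \<Rightarrow> real" where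
  "qS F adj p S = (\<Sum>I \<in> {I \<in> IndS adj F. S \<subseteq> I}.
       (-1) ^ (card I - card S) * (\<Prod>f\<in>I. p f))"

definition charge_bound :: "'a set \<Rightarrow> 'a set set \<Rightarrow> ('a set \<Rightarrow> 'a \<Rightarrow> 'a \<Rightarrow> real)
    \<Rightarrow> ('a \<Rightarrow> real) \<Rightarrow> ('a set \<Rightarrow> real) \<Rightarrow> bool" where
  "charge_bound Omega F rho omega lam \<longleftrightarrow>
     (\<forall>f\<in>F. \<forall>s'\<in>Omega.
        lam f \<ge> (\<Sum>s \<in> {s \<in> f. s' \<in> Asupp Omega rho f s}. rho f s s' * omega s / omega s'))"

definition shearer :: "'a set \<Rightarrow> 'a set set \<Rightarrow> ('a set \<Rightarrow> 'a \<Rightarrow> 'a \<Rightarrow> real)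
    \<Rightarrow> ('a \<Rightarrow> real) \<Rightarrow> ('a set \<Rightarrow> 'a set \<Rightarrow> bool)
    \<Rightarrow> ('a set \<Rightarrow> real) \<Rightarrow> ('a set \<Rightarrow> real) \<Rightarrow> real \<Rightarrow> bool" where
  "shearer Omega F rho omega adj p lam theta \<longleftrightarrow>
     (\<forall>S. S \<subseteq> F \<longrightarrow> qS F adj p S \<ge> 0) \<and> qS F adj p {} > 0 \<and>
     charge_bound Omega F rho omega lam \<and>
     0 < theta \<and> theta < 1 \<and> (\<forall>f\<in>F. lam f \<le> theta * p f)"

end

theory Submission
  imports Defs
begin

(* Along a walk, a flaw that is addressed twice must be reintroduced in between;
   for the stable partition W = W_1 ... W_s of a word of a walk (or of its reverse) this
   forces I_(r+1) \<subseteq> \<Gamma>(I_r) rather than merely \<Gamma>\<^sup>+(I_r). As the blocks are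
   sorted by \<pi>, the word is determined by (I_1, ..., I_s), and with \<psi> = \<lambda>/\<theta> one has
   \<lambda>_W = \<theta>^|W| \<psi>(I_1) ... \<psi>(I_s). Summing \<psi>(I_2) ... \<psi>(I_s) over all such chains
   starting at R = I_1 gives at most \<Sum>_(J \<in> Ind(\<Gamma>(R))) \<mu>(J), by induction on the length of
   the chains, grouping them by their first set, as soon as
   \<psi>(R) \<Sum>_(J \<in> Ind(\<Gamma>(R))) \<mu>(J) \<le> \<mu>(R) for every independent R. Both hypotheses give this
   inequality: (1) because \<Sum>_(J \<in> Ind(A \<union> B)) \<mu>(J) is submultiplicative for product weights,
   (2) by Shearer's identity q_R = p^R \<Sum>_(J \<in> Ind(\<Gamma>\<^sup>+(R))) q_J. Hence every finite partial
   sum over Stab_\<pi>(R,t) is at most \<mu>(R) \<theta>^t. *)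

section \<open>Independent sets and neighbourhoods\<close>

(* \<Gamma>(S) of the paper, whereas GamP is \<Gamma>\<^sup>+(S). *)
definition GamS :: "'a set set \<Rightarrow> ('a set \<Rightarrow> 'a set \<Rightarrow> bool) \<Rightarrow> 'a set set \<Rightarrow> 'a set set" where
  "GamS F adj S = (\<Union>f\<in>S. Gam F adj f)"

lemma GamS_subset: "GamS F adj R \<subseteq> F"
  by (auto simp: GamS_def Gam_def)

lemma finite_IndS: "finite S \<Longrightarrow> finite (IndS adj S)"
  unfolding IndS_def by (rule finite_subset[of _ "Pow S"]) auto

lemma empty_in_IndS [simp]: "{} \<in> IndS adj S"
  by (simp add: IndS_def indep_def)

lemma IndS_empty: "IndS adj {} = {{}}"
  by (auto simp: IndS_def indep_def)

lemma IndS_mono: "S \<subseteq> T \<Longrightarrow> IndS adj S \<subseteq> IndS adj T"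
  by (auto simp: IndS_def)

lemma GamS_insert: "GamS F adj (insert f R) = Gam F adj f \<union> GamS F adj R"
  by (simp add: GamS_def)

section \<open>Repeated flaws along a walk\<close>

lemma walk_Fs_step:
  assumes "setting Omega F rho omega adj" "walk Omega F rho ss ws" "k < length ws"
  shows "Fs F (ss ! Suc k) \<subseteq> (Fs F (ss ! k) - {ws ! k}) \<union> Gam F adj (ws ! k)"
  using assms unfolding setting_def walk_def by blast

lemma walk_flaw_reintroduced:
  assumes S: "setting Omega F rho omega adj" and W: "walk Omega F rho ss ws"
    and "i < j" "j \<le> length ws" "ws ! i \<in> Fs F (ss ! j)"
  shows "\<exists>k. i \<le> k \<and> k < j \<and> ws ! i \<in> Gam F adj (ws ! k)"
  using assms(3-)
proof (induction j)
  case 0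
  then show ?case by simp
next
  case (Suc j)
  have "ws ! i \<in> Fs F (ss ! j) - {ws ! j} \<or> ws ! i \<in> Gam F adj (ws ! j)"
    using walk_Fs_step[OF S W, of j] Suc.prems by auto
  then show ?case
  proof
    assume "ws ! i \<in> Fs F (ss ! j) - {ws ! j}"
    then have "ws ! i \<noteq> ws ! j" "ws ! i \<in> Fs F (ss ! j)" by auto
    then have "i < j" "ws ! i \<in> Fs F (ss ! j)" using Suc.prems(1) by (auto simp: less_Suc_eq)
    then show ?thesis using Suc.IH Suc.prems(2) by (meson Suc_leD less_SucI)
  qed (use Suc.prems(1) in \<open>auto simp: less_Suc_eq_le\<close>)
qed

definition reintroduces_repeats :: "'a set set \<Rightarrow> ('a set \<Rightarrow> 'a set \<Rightarrow> bool) \<Rightarrow> 'a set list \<Rightarrow> bool" where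
  "reintroduces_repeats F adj W \<longleftrightarrow>
     (\<forall>xs f ys zs. W = xs @ f # ys @ f # zs \<longrightarrow> (\<exists>g \<in> insert f (set ys). f \<in> Gam F adj g))"

lemma walk_reintroduces_repeats:
  assumes S: "setting Omega F rho omega adj" and W: "walk Omega F rho ss W"
  shows "reintroduces_repeats F adj W"
  unfolding reintroduces_repeats_def
proof (intro allI impI)
  fix xs f ys zs assume W_eq: "W = xs @ f # ys @ f # zs"
  let ?j = "length xs + Suc (length ys)"
  have "W ! ?j \<in> F" "ss ! ?j \<in> W ! ?j"
    using W unfolding W_eq walk_def by (auto simp del: nth_append_length_plus)
  then have "W ! length xs \<in> Fs F (ss ! ?j)" by (simp add: Fs_def W_eq nth_append)
  then obtain k where k: "length xs \<le> k" "k < ?j" "f \<in> Gam F adj (W ! k)"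
    using walk_flaw_reintroduced[OF S W, of "length xs" ?j] W_eq by auto
  have "W ! k \<in> insert f (set ys)"
    using k(1,2) by (auto simp: W_eq nth_append nth_Cons split: nat.splits)
  then show "\<exists>g \<in> insert f (set ys). f \<in> Gam F adj g" using k(3) by blast
qed

lemma reintroduces_repeats_rev:
  "reintroduces_repeats F adj (rev W) \<longleftrightarrow> reintroduces_repeats F adj W"
proof -
  have "reintroduces_repeats F adj W" if "reintroduces_repeats F adj (rev W)" for W
    unfolding reintroduces_repeats_def
  proof (intro allI impI)
    fix xs f ys zs assume "W = xs @ f # ys @ f # zs"
    then have "rev W = rev zs @ f # rev ys @ f # rev xs" by simp
    then show "\<exists>g \<in> insert f (set ys). f \<in> Gam F adj g"
      using that unfolding reintroduces_repeats_def by fastforce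
  qed
  from this[of W] this[of "rev W"] show ?thesis by auto
qed

lemma reintroduces_repeats_infix:
  "reintroduces_repeats F adj (U @ V @ X) \<Longrightarrow> reintroduces_repeats F adj V"
  unfolding reintroduces_repeats_def by (metis append.assoc append_Cons)

section \<open>Stable partitions\<close>

lemma successively_iff_nth:
  "successively P xs \<longleftrightarrow> (\<forall>i. Suc i < length xs \<longrightarrow> P (xs ! i) (xs ! Suc i))"
  by (induction P xs rule: successively.induct) (auto simp: All_less_Suc2)

lemma stable_partition_iff:
  "stable_partition F adj Ws \<longleftrightarrow>
     Ws \<noteq> [] \<and> (\<forall>w\<in>set Ws. w \<noteq> [] \<and> distinct w \<and> set w \<in> IndS adj F) \<and>
     successively (\<lambda>v w. set w \<subseteq> GamP F adj (set v)) Ws"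
  unfolding stable_partition_def successively_iff_nth ..

lemma stable_partition_Cons:
  "stable_partition F adj (w # Ws) \<longleftrightarrow>
     w \<noteq> [] \<and> distinct w \<and> set w \<in> IndS adj F \<and>
     (Ws = [] \<or> stable_partition F adj Ws \<and> set (hd Ws) \<subseteq> GamP F adj (set w))"
  by (auto simp: stable_partition_iff successively_Cons)

lemma stable_partition_first_block:
  assumes "stable_partition F adj (a # As)" "stable_partition F adj (b # Bs)"
    and "a @ concat As = b @ concat Bs"
  shows "a = b"
proof -
  have no_prefix: "False"
    if A: "stable_partition F adj (a # As)" and B: "stable_partition F adj (b # Bs)"
      and eq: "a @ concat As = b @ concat Bs" and shorter: "length a < length b" for a As b Bs
  proof -
    have "take (length a) b = a" "drop (length a) b \<noteq> []"
      using arg_cong[OF eq, of "take (length a)"] shorter by simp_all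
    then obtain g b' where b: "b = a @ g # b'"
      by (metis append_take_drop_id neq_Nil_conv)
    then have "concat As = g # b' @ concat Bs" using eq by simp
    then obtain c Cs where As: "As = c # Cs" "c @ concat Cs = g # b' @ concat Bs"
      by (cases As) auto
    have "c \<noteq> []" using A As(1) by (simp add: stable_partition_Cons)
    then have "g \<in> set (hd As)" using As by (cases c) auto
    then obtain f where "f \<in> set a" "g = f \<or> adj f g"
      using A As(1) unfolding stable_partition_Cons GamP_def Gam_def by auto
    moreover have "distinct b" "indep adj (set b)"
      using B unfolding stable_partition_Cons IndS_def by simp_all
    ultimately show False using b unfolding indep_def by auto
  qed
  have "length a = length b"
    using no_prefix[OF assms] no_prefix[OF assms(2,1) assms(3)[symmetric]] by (meson linorder_neqE_nat)
  then show ?thesis using assms(3) by simp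
qed

lemma stable_partition_concat_nonempty:
  "stable_partition F adj Ws \<Longrightarrow> concat Ws \<noteq> []"
  by (cases Ws) (auto simp: stable_partition_def)

lemma stable_partition_unique:
  "stable_partition F adj Ws \<Longrightarrow> stable_partition F adj Vs \<Longrightarrow> concat Ws = concat Vs \<Longrightarrow> Ws = Vs"
proof (induction Ws arbitrary: Vs)
  case Nil
  then show ?case by (simp add: stable_partition_def)
next
  case (Cons w Ws)
  then obtain v Vs' where Vs: "Vs = v # Vs'"
    by (cases Vs) (auto simp: stable_partition_def)
  have "w = v" using stable_partition_first_block Cons.prems Vs by auto
  then have "concat Ws = concat Vs'" using Cons.prems(3) Vs by simp
  moreover have "Ws = [] \<or> stable_partition F adj Ws" "Vs' = [] \<or> stable_partition F adj Vs'"
    using Cons.prems(1,2) Vs by (auto simp: stable_partition_Cons)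
  ultimately have "Ws = Vs'"
    using Cons.IH stable_partition_concat_nonempty by (metis concat.simps(1))
  then show ?case using \<open>w = v\<close> Vs by simp
qed

definition stable_blocks :: "'a set set \<Rightarrow> ('a set \<Rightarrow> 'a set \<Rightarrow> bool) \<Rightarrow> 'a set list \<Rightarrow> 'a set list list" where
  "stable_blocks F adj W = (THE Ws. stable_partition F adj Ws \<and> concat Ws = W)"

lemma stable_blocks_concat:
  assumes "stable_partition F adj Ws"
  shows "stable_blocks F adj (concat Ws) = Ws"
  unfolding stable_blocks_def
  using assms stable_partition_unique by (intro the_equality) auto

lemma RW_concat:
  assumes "stable_partition F adj Ws"
  shows "RW F adj (concat Ws) = set (hd Ws)"
proof -
  have "RW F adj (concat Ws) = set (hd (stable_blocks F adj (concat Ws)))"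
    using stable_partition_concat_nonempty[OF assms] by (simp only: RW_def stable_blocks_def if_False)
  then show ?thesis by (simp only: stable_blocks_concat[OF assms])
qed

(* A flaw g in both blocks occurs twice in v @ w, so g is adjacent to itself or to a flaw
   between its two occurrences; independence of the blocks excludes the latter. *)
lemma adjacent_blocks_Gam:
  assumes repeats: "reintroduces_repeats F adj (v @ w)"
    and v: "distinct v" "indep adj (set v)" and w: "distinct w" "indep adj (set w)"
    and vw: "set w \<subseteq> GamP F adj (set v)"
  shows "set w \<subseteq> GamS F adj (set v)"
proof
  fix g assume g: "g \<in> set w"
  show "g \<in> GamS F adj (set v)"
  proof (cases "g \<in> set v")
    case True
    obtain a b c d where "v = a @ g # b" "w = c @ g # d"
      using True g by (meson split_list)
    then have "v @ w = a @ g # (b @ c) @ g # d" by simp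
    then obtain h where h: "h \<in> insert g (set (b @ c))" "g \<in> Gam F adj h"
      using repeats unfolding reintroduces_repeats_def by blast
    have "h = g"
    proof (rule ccontr)
      assume "h \<noteq> g"
      moreover have "adj h g" using h(2) by (simp add: Gam_def)
      ultimately show False
        using h(1) v w \<open>v = a @ g # b\<close> \<open>w = c @ g # d\<close> True g
        unfolding indep_def by auto
    qed
    then show ?thesis using h(2) True by (auto simp: GamS_def)
  next
    case False
    then show ?thesis using g vw by (auto simp: GamP_def GamS_def)
  qed
qed

lemma successively_GamS_blocks:
  assumes "\<forall>w\<in>set Ws. distinct w \<and> indep adj (set w)"
    and "successively (\<lambda>v w. set w \<subseteq> GamP F adj (set v)) Ws"
    and "reintroduces_repeats F adj (concat Ws)"
  shows "successively (\<lambda>v w. set w \<subseteq> GamS F adj (set v)) Ws"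
  using assms
proof (induction "\<lambda>v w. set w \<subseteq> GamP F adj (set v)" Ws rule: successively.induct)
  case (3 v w Ws)
  have "reintroduces_repeats F adj (v @ w)" "reintroduces_repeats F adj (concat (w # Ws))"
    using reintroduces_repeats_infix[of F adj "[]" "v @ w" "concat Ws"]
      reintroduces_repeats_infix[of F adj v "concat (w # Ws)" "[]"] "3.prems"(3) by simp_all
  moreover have "successively (\<lambda>v w. set w \<subseteq> GamP F adj (set v)) (w # Ws)"
    "set w \<subseteq> GamP F adj (set v)"
    using "3.prems"(2) by simp_all
  ultimately show ?case
    using "3.hyps" "3.prems"(1) adjacent_blocks_Gam[of F adj v w] by simp
qed simp_all

section \<open>Chains of neighbourhoods and their weights\<close>

fun Gam_chain :: "'a set set \<Rightarrow> ('a set \<Rightarrow> 'a set \<Rightarrow> bool) \<Rightarrow> 'a set set \<Rightarrow> 'a set set list \<Rightarrow> bool" where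
  "Gam_chain F adj R [] \<longleftrightarrow> True"
| "Gam_chain F adj R (J # Js) \<longleftrightarrow> J \<noteq> {} \<and> J \<in> IndS adj F \<and> J \<subseteq> GamS F adj R \<and> Gam_chain F adj J Js"

lemma Gam_chain_iff:
  "Gam_chain F adj R Js \<longleftrightarrow>
     successively (\<lambda>I J. J \<subseteq> GamS F adj I) (R # Js) \<and> (\<forall>J\<in>set Js. J \<noteq> {} \<and> J \<in> IndS adj F)"
  by (induction Js arbitrary: R) (auto simp: successively_Cons)

lemma Stab_stable_blocks:
  assumes S: "setting Omega F rho omega adj"
    and W: "W \<in> Stab Omega F rho adj perm" "W \<noteq> []"
  obtains Ws where "stable_partition F adj Ws" "concat Ws = W" "stable_blocks F adj W = Ws"
    "RW F adj W = set (hd Ws)" "\<forall>w\<in>set Ws. sorted_wrt (\<lambda>f g. perm f < perm g) w"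
    "Gam_chain F adj (set (hd Ws)) (map set (tl Ws))"
proof -
  obtain Ws where Ws: "stable_partition F adj Ws" "concat Ws = W"
      "\<forall>w\<in>set Ws. sorted_wrt (\<lambda>f g. perm f < perm g) w"
    using W unfolding Stab_def pi_stable_word_def by blast
  obtain ss where "walk Omega F rho ss W \<or> walk Omega F rho ss (rev W)"
    using W unfolding Stab_def by blast
  then have "reintroduces_repeats F adj (concat Ws)"
    using walk_reintroduces_repeats[OF S] reintroduces_repeats_rev Ws(2) by blast
  moreover have blocks: "\<forall>w\<in>set Ws. w \<noteq> [] \<and> distinct w \<and> set w \<in> IndS adj F"
    and "successively (\<lambda>v w. set w \<subseteq> GamP F adj (set v)) Ws"
    using Ws(1) unfolding stable_partition_iff by simp_all
  ultimately have "successively (\<lambda>v w. set w \<subseteq> GamS F adj (set v)) Ws"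
    using successively_GamS_blocks[of Ws adj F] unfolding IndS_def by blast
  then have "successively (\<lambda>I J. J \<subseteq> GamS F adj I) (map set Ws)"
    by (simp add: successively_map)
  moreover obtain w0 Ws' where Ws0: "Ws = w0 # Ws'"
    using Ws(1) by (cases Ws) (auto simp: stable_partition_def)
  ultimately have "Gam_chain F adj (set (hd Ws)) (map set (tl Ws))"
    using blocks unfolding Gam_chain_iff by simp
  then show thesis
    using that Ws stable_blocks_concat[OF Ws(1)] RW_concat[OF Ws(1)] by simp
qed

definition chain_weight :: "('a set \<Rightarrow> real) \<Rightarrow> 'a set set list \<Rightarrow> real" where
  "chain_weight psi Js = (\<Prod>J\<leftarrow>Js. prod psi J)"

lemma chain_weight_Nil [simp]: "chain_weight psi [] = 1"
  and chain_weight_Cons [simp]: "chain_weight psi (J # Js) = prod psi J * chain_weight psi Js"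
  by (simp_all add: chain_weight_def)

lemma chain_weight_nonneg:
  "\<forall>f\<in>F. 0 \<le> psi f \<Longrightarrow> Gam_chain F adj R Js \<Longrightarrow> 0 \<le> chain_weight psi Js"
  by (induction Js arbitrary: R) (auto intro!: mult_nonneg_nonneg prod_nonneg simp: IndS_def)

definition chain_majorant ::
    "'a set set \<Rightarrow> ('a set \<Rightarrow> 'a set \<Rightarrow> bool) \<Rightarrow> ('a set \<Rightarrow> real) \<Rightarrow> ('a set set \<Rightarrow> real) \<Rightarrow> bool" where
  "chain_majorant F adj psi M \<longleftrightarrow> M {} = 1 \<and> (\<forall>J\<in>IndS adj F. 0 \<le> M J) \<and>
     (\<forall>R\<in>IndS adj F. prod psi R * (\<Sum>J\<in>IndS adj (GamS F adj R). M J) \<le> M R)"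

lemma sum_by_head:
  assumes "finite B" "[] \<notin> B"
  shows "(\<Sum>Js\<in>B. g Js) = (\<Sum>J\<in>hd ` B. \<Sum>Ks\<in>{Ks. J # Ks \<in> B}. g (J # Ks))"
proof -
  have "(\<Sum>Js\<in>B. g Js) = (\<Sum>J\<in>hd ` B. \<Sum>Js\<in>{Js\<in>B. hd Js = J}. g Js)"
    using assms(1) by (rule sum.image_gen)
  also have "\<dots> = (\<Sum>J\<in>hd ` B. \<Sum>Ks\<in>{Ks. J # Ks \<in> B}. g (J # Ks))"
  proof (rule sum.cong[OF refl])
    fix J
    have "{Js\<in>B. hd Js = J} = (#) J ` {Ks. J # Ks \<in> B}"
      using assms(2) by (auto simp: image_iff) (metis list.collapse)
    then show "(\<Sum>Js\<in>{Js\<in>B. hd Js = J}. g Js) = (\<Sum>Ks\<in>{Ks. J # Ks \<in> B}. g (J # Ks))"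
      by (simp add: sum.reindex)
  qed
  finally show ?thesis .
qed

lemma finite_tails: "finite B \<Longrightarrow> finite {Ks. J # Ks \<in> B}"
  using finite_vimageI[of B "(#) J"] by (simp add: vimage_def inj_on_def)

lemma chain_weight_sum_le_by_head:
  assumes "finite B"
  shows "(\<Sum>Js\<in>B. chain_weight psi Js)
    \<le> 1 + (\<Sum>J\<in>hd ` (B - {[]}). prod psi J * (\<Sum>Ks\<in>{Ks. J # Ks \<in> B}. chain_weight psi Ks))"
proof -
  have "(\<Sum>Js\<in>B. chain_weight psi Js) \<le> 1 + (\<Sum>Js\<in>B - {[]}. chain_weight psi Js)"
    using assms by (cases "[] \<in> B") (simp_all add: sum.remove)
  also have "(\<Sum>Js\<in>B - {[]}. chain_weight psi Js) =
      (\<Sum>J\<in>hd ` (B - {[]}). prod psi J * (\<Sum>Ks\<in>{Ks. J # Ks \<in> B}. chain_weight psi Ks))"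
    using assms by (simp add: sum_by_head sum_distrib_left)
  finally show ?thesis .
qed

lemma chain_weight_sum_le_sum_IndS:
  assumes F: "finite F" and psi: "\<forall>f\<in>F. 0 \<le> psi f" and M: "chain_majorant F adj psi M"
    and B: "finite B" "\<forall>Js\<in>B. Gam_chain F adj R Js"
  shows "(\<Sum>Js\<in>B. chain_weight psi Js) \<le> (\<Sum>J\<in>IndS adj (GamS F adj R). M J)"
proof -
  have "(\<Sum>Js\<in>B. chain_weight psi Js) \<le> (\<Sum>J\<in>IndS adj (GamS F adj R). M J)"
    if "finite B" "\<forall>Js\<in>B. Gam_chain F adj R Js \<and> length Js \<le> n" for n R B
    using that
  proof (induction n arbitrary: R B rule: less_induct)
    case (less n R B)
    let ?H = "hd ` (B - {[]})" and ?Ind = "IndS adj (GamS F adj R)"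
    have finite_Ind: "finite ?Ind" using finite_IndS finite_subset[OF GamS_subset F] by blast
    have head: "\<exists>Ks. J # Ks \<in> B" if "J \<in> ?H" for J
      using that by (metis DiffE hd_Cons_tl imageE singletonI)
    have "(\<Sum>Js\<in>B. chain_weight psi Js)
        \<le> 1 + (\<Sum>J\<in>?H. prod psi J * (\<Sum>Ks\<in>{Ks. J # Ks \<in> B}. chain_weight psi Ks))"
      using less.prems(1) by (rule chain_weight_sum_le_by_head)
    also have "\<dots> \<le> 1 + (\<Sum>J\<in>?H. M J)"
    proof (intro add_left_mono sum_mono)
      fix J assume "J \<in> ?H"
      then obtain Ks where "J # Ks \<in> B" using head by blast
      then have "Gam_chain F adj R (J # Ks) \<and> length (J # Ks) \<le> n" using less.prems(2) by blast
      then have J: "J \<in> IndS adj F" and "n - 1 < n" by auto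
      moreover have "\<forall>Ks\<in>{Ks. J # Ks \<in> B}. Gam_chain F adj J Ks \<and> length Ks \<le> n - 1"
      proof
        fix Ks assume "Ks \<in> {Ks. J # Ks \<in> B}"
        then have "Gam_chain F adj R (J # Ks) \<and> length (J # Ks) \<le> n" using less.prems(2) by blast
        then show "Gam_chain F adj J Ks \<and> length Ks \<le> n - 1" by auto
      qed
      ultimately have "(\<Sum>Ks\<in>{Ks. J # Ks \<in> B}. chain_weight psi Ks) \<le> (\<Sum>J\<in>IndS adj (GamS F adj J). M J)"
        using less.IH finite_tails[OF less.prems(1)] by blast
      moreover have "0 \<le> prod psi J"
        using J psi by (intro prod_nonneg) (auto simp: IndS_def)
      ultimately show "prod psi J * (\<Sum>Ks\<in>{Ks. J # Ks \<in> B}. chain_weight psi Ks) \<le> M J"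
        using M J unfolding chain_majorant_def by (meson mult_left_mono order_trans)
    qed
    also have "\<dots> \<le> M {} + (\<Sum>J\<in>?Ind - {{}}. M J)"
    proof (intro add_mono sum_mono2)
      show "1 \<le> M {}" using M by (simp add: chain_majorant_def)
      show "finite (?Ind - {{}})" using finite_Ind by blast
      show "?H \<subseteq> ?Ind - {{}}"
      proof
        fix J assume "J \<in> ?H"
        then obtain Ks where "J # Ks \<in> B" using head by blast
        then have "Gam_chain F adj R (J # Ks)" using less.prems(2) by blast
        then show "J \<in> ?Ind - {{}}" by (auto simp: IndS_def)
      qed
      show "0 \<le> M J" if "J \<in> ?Ind - {{}} - ?H" for J
        using that M IndS_mono[OF GamS_subset] unfolding chain_majorant_def by blast
    qed
    also have "\<dots> = (\<Sum>J\<in>?Ind. M J)"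
      using sum.remove[OF finite_Ind empty_in_IndS, of M] by simp
    finally show ?case .
  qed
  moreover have "\<forall>Js\<in>B. Gam_chain F adj R Js \<and> length Js \<le> Max (length ` B)"
    using B by simp
  ultimately show ?thesis
    using B(1) by blast
qed

section \<open>Product weights\<close>

lemma sum_IndS_prod_nonneg:
  fixes m :: "'a set \<Rightarrow> real"
  shows "\<forall>g\<in>S. 0 \<le> m g \<Longrightarrow> 0 \<le> (\<Sum>J\<in>IndS adj S. prod m J)"
  by (intro sum_nonneg prod_nonneg) (auto simp: IndS_def)

lemma sum_IndS_Un_le:
  fixes m :: "'a set \<Rightarrow> real"
  assumes A: "finite A" and B: "finite B" and m: "\<forall>g\<in>A \<union> B. 0 \<le> m g"
  shows "(\<Sum>J\<in>IndS adj (A \<union> B). prod m J) \<le> (\<Sum>S\<in>IndS adj A. prod m S) * (\<Sum>T\<in>IndS adj B. prod m T)"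
proof -
  let ?split = "\<lambda>J. (J \<inter> A, J - A)"
  have "inj_on ?split (IndS adj (A \<union> B))"
    by (rule inj_onI) blast
  moreover have split_Ind: "?split ` IndS adj (A \<union> B) \<subseteq> IndS adj A \<times> IndS adj B"
    by (auto simp: IndS_def indep_def)
  moreover have "prod m J = prod m (J \<inter> A) * prod m (J - A)" if "J \<in> IndS adj (A \<union> B)" for J
  proof -
    have "finite J" using that A B finite_subset by (auto simp: IndS_def)
    then show ?thesis by (metis Int_Diff_Un Int_Diff_disjoint finite_Int finite_Diff prod.union_disjoint)
  qed
  ultimately have "(\<Sum>J\<in>IndS adj (A \<union> B). prod m J) = (\<Sum>(S, T)\<in>?split ` IndS adj (A \<union> B). prod m S * prod m T)"
    by (simp add: sum.reindex)
  also have "\<dots> \<le> (\<Sum>(S, T)\<in>IndS adj A \<times> IndS adj B. prod m S * prod m T)"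
  proof (rule sum_mono2[OF _ split_Ind])
    show "finite (IndS adj A \<times> IndS adj B)" using A B by (simp add: finite_IndS)
    have "0 \<le> prod m S * prod m T" if "S \<in> IndS adj A" "T \<in> IndS adj B" for S T
      using that m by (intro mult_nonneg_nonneg prod_nonneg) (auto simp: IndS_def)
    then show "0 \<le> (case ST of (S, T) \<Rightarrow> prod m S * prod m T)"
      if "ST \<in> IndS adj A \<times> IndS adj B - ?split ` IndS adj (A \<union> B)" for ST
      using that by auto
  qed
  also have "\<dots> = (\<Sum>S\<in>IndS adj A. prod m S) * (\<Sum>T\<in>IndS adj B. prod m T)"
    by (simp add: sum_product sum.cartesian_product)
  finally show ?thesis .
qed

lemma sum_IndS_GamS_le_prod:
  fixes m :: "'a set \<Rightarrow> real"
  assumes F: "finite F" and m: "\<forall>g\<in>F. 0 \<le> m g" and R: "finite R"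
  shows "(\<Sum>J\<in>IndS adj (GamS F adj R). prod m J) \<le> (\<Prod>f\<in>R. \<Sum>S\<in>IndS adj (Gam F adj f). prod m S)"
  using R
proof (induction R rule: finite_induct)
  case empty
  then show ?case by (simp add: GamS_def IndS_empty)
next
  case (insert f R)
  have Gam: "Gam F adj f \<subseteq> F" by (auto simp: Gam_def)
  have "(\<Sum>J\<in>IndS adj (GamS F adj (insert f R)). prod m J)
      \<le> (\<Sum>S\<in>IndS adj (Gam F adj f). prod m S) * (\<Sum>T\<in>IndS adj (GamS F adj R). prod m T)"
    unfolding GamS_insert
    using Gam GamS_subset[of F adj R] F m
    by (intro sum_IndS_Un_le) (auto intro: finite_subset)
  also have "\<dots> \<le> (\<Sum>S\<in>IndS adj (Gam F adj f). prod m S) * (\<Prod>f\<in>R. \<Sum>S\<in>IndS adj (Gam F adj f). prod m S)"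
    using insert.IH sum_IndS_prod_nonneg[of "Gam F adj f" m adj] Gam m
    by (intro mult_left_mono) auto
  also have "\<dots> = (\<Prod>f\<in>insert f R. \<Sum>S\<in>IndS adj (Gam F adj f). prod m S)"
    using insert.hyps by simp
  finally show ?case .
qed

lemma chain_majorant_prod:
  fixes m psi :: "'a set \<Rightarrow> real"
  assumes F: "finite F" and m: "\<forall>f\<in>F. 0 < m f" and psi: "\<forall>f\<in>F. 0 \<le> psi f"
    and local_bound: "\<forall>f\<in>F. psi f * (\<Sum>S\<in>IndS adj (Gam F adj f). prod m S) \<le> m f"
  shows "chain_majorant F adj psi (prod m)"
  unfolding chain_majorant_def
proof (intro conjI ballI)
  have m0: "\<forall>f\<in>F. 0 \<le> m f" using m by (simp add: less_imp_le)
  show "0 \<le> prod m J" if "J \<in> IndS adj F" for J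
    using that m0 by (intro prod_nonneg) (auto simp: IndS_def)
  fix R assume "R \<in> IndS adj F"
  then have RF: "R \<subseteq> F" by (simp add: IndS_def)
  have nonneg: "0 \<le> (\<Sum>S\<in>IndS adj (Gam F adj f). prod m S)" if "f \<in> F" for f
    using m0 by (intro sum_IndS_prod_nonneg) (auto simp: Gam_def)
  have "prod psi R * (\<Sum>J\<in>IndS adj (GamS F adj R). prod m J)
      \<le> prod psi R * (\<Prod>f\<in>R. \<Sum>S\<in>IndS adj (Gam F adj f). prod m S)"
    using RF psi sum_IndS_GamS_le_prod[OF F m0 finite_subset[OF RF F], of adj]
    by (intro mult_left_mono prod_nonneg) auto
  also have "\<dots> = (\<Prod>f\<in>R. psi f * (\<Sum>S\<in>IndS adj (Gam F adj f). prod m S))"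
    by (simp add: prod.distrib)
  also have "\<dots> \<le> prod m R"
    using RF psi nonneg local_bound by (intro prod_mono) auto
  finally show "prod psi R * (\<Sum>J\<in>IndS adj (GamS F adj R). prod m J) \<le> prod m R" .
qed simp

section \<open>Shearer's condition\<close>

lemma sum_Pow_neg_one_power_card:
  assumes "finite X"
  shows "(\<Sum>J\<in>Pow X. (-1::real) ^ card J) = (if X = {} then 1 else 0)"
proof -
  have "(\<Prod>x\<in>X. (1::real) - 1) = (\<Sum>J\<in>Pow X. (-1) ^ card J * (\<Prod>x\<in>J. 1) * (\<Prod>x\<in>X-J. 1))"
    by (rule prod_diff_conv_sum[OF assms])
  then have "(\<Sum>J\<in>Pow X. (-1::real) ^ card J) = (\<Prod>x\<in>X. (1::real) - 1)"
    by simp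
  also have "\<dots> = (if X = {} then 1 else 0)"
    using assms by (simp add: card_gt_0_iff)
  finally show ?thesis .
qed

lemma sum_qS_IndS:
  fixes p :: "'a set \<Rightarrow> real"
  assumes F: "finite F" and G: "G \<subseteq> F"
  shows "(\<Sum>J\<in>IndS adj G. qS F adj p J) = (\<Sum>I | I \<in> IndS adj F \<and> I \<inter> G = {}. (-1) ^ card I * prod p I)"
proof -
  have "(\<Sum>J\<in>IndS adj G. qS F adj p J) =
      (\<Sum>I\<in>IndS adj F. \<Sum>J | J \<in> IndS adj G \<and> J \<subseteq> I. (-1) ^ (card I - card J) * prod p I)"
    unfolding qS_def using F finite_IndS[OF finite_subset[OF G F]]
    by (subst sum.swap_restrict) (auto simp: finite_IndS)
  also have "\<dots> = (\<Sum>I\<in>IndS adj F. if I \<inter> G = {} then (-1) ^ card I * prod p I else 0)"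
  proof (rule sum.cong[OF refl])
    fix I assume I: "I \<in> IndS adj F"
    then have "finite I" using F by (auto simp: IndS_def intro: finite_subset)
    have "{J. J \<in> IndS adj G \<and> J \<subseteq> I} = Pow (I \<inter> G)"
      using I by (auto simp: IndS_def indep_def)
    then have "(\<Sum>J | J \<in> IndS adj G \<and> J \<subseteq> I. (-1) ^ (card I - card J) * prod p I)
        = (\<Sum>J\<in>Pow (I \<inter> G). (-1) ^ card J) * ((-1) ^ card I * prod p I)"
      using \<open>finite I\<close>
      by (auto simp: sum_distrib_right card_mono neg_one_power_add_eq_neg_one_power_diff
          power_add intro!: sum.cong simp flip: neg_one_power_add_eq_neg_one_power_diff)
    then show "(\<Sum>J | J \<in> IndS adj G \<and> J \<subseteq> I. (-1) ^ (card I - card J) * prod p I)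
        = (if I \<inter> G = {} then (-1) ^ card I * prod p I else 0)"
      using sum_Pow_neg_one_power_card[of "I \<inter> G"] \<open>finite I\<close> by simp
  qed
  also have "\<dots> = (\<Sum>I | I \<in> IndS adj F \<and> I \<inter> G = {}. (-1) ^ card I * prod p I)"
    using F by (simp add: finite_IndS sum.inter_filter)
  finally show ?thesis .
qed

lemma IndS_Un_disjoint_GamP:
  assumes sym: "\<forall>f\<in>F. \<forall>g\<in>F. adj f g \<longrightarrow> adj g f"
    and R: "R \<in> IndS adj F" and I: "I \<in> IndS adj F" and disj: "I \<inter> GamP F adj R = {}"
  shows "R \<union> I \<in> IndS adj F"
proof -
  have RF: "R \<subseteq> F" "indep adj R" and IF: "I \<subseteq> F" "indep adj I"
    using R I by (simp_all add: IndS_def)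
  have no_edge: "\<not> adj f g" if "f \<in> R" "g \<in> I" for f g
  proof
    assume "adj f g"
    then have "g \<in> GamP F adj R" using that IF(1) unfolding GamP_def Gam_def by blast
    then show False using that disj by blast
  qed
  have no_back_edge: "\<not> adj g f" if "f \<in> R" "g \<in> I" for f g
    using no_edge[OF that] that sym RF(1) IF(1) by blast
  have "indep adj (R \<union> I)"
    unfolding indep_def
  proof (intro ballI impI)
    fix f g assume "f \<in> R \<union> I" "g \<in> R \<union> I" "f \<noteq> g"
    then show "\<not> adj f g"
      using RF(2) IF(2) no_edge no_back_edge by (auto simp: indep_def)
  qed
  then show ?thesis using RF(1) IF(1) by (simp add: IndS_def)
qed

lemma qS_eq_prod_sum_disjoint:
  fixes p :: "'a set \<Rightarrow> real"
  assumes F: "finite F" and sym: "\<forall>f\<in>F. \<forall>g\<in>F. adj f g \<longrightarrow> adj g f" and R: "R \<in> IndS adj F"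
  shows "qS F adj p R =
    prod p R * (\<Sum>I | I \<in> IndS adj F \<and> I \<inter> GamP F adj R = {}. (-1) ^ card I * prod p I)"
proof -
  have R_GamP: "R \<subseteq> GamP F adj R" by (auto simp: GamP_def)
  have fin: "finite I" if "I \<in> IndS adj F" for I
    using that finite_subset[OF _ F] by (simp add: IndS_def)
  let ?S = "{I. I \<in> IndS adj F \<and> I \<inter> GamP F adj R = {}}"
  let ?T = "{I. I \<in> IndS adj F \<and> R \<subseteq> I}"
  have "(\<Sum>I\<in>?S. prod p R * ((-1) ^ card I * prod p I))
      = (\<Sum>I\<in>?T. (-1) ^ (card I - card R) * prod p I)"
  proof (rule sum.reindex_bij_witness[of ?S "\<lambda>I. I - R" "\<lambda>I. R \<union> I" ?T])
    fix I assume I: "I \<in> ?S"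
    then have disj: "R \<inter> I = {}" using R_GamP by blast
    show "R \<union> I - R = I" using disj by blast
    show "R \<union> I \<in> ?T"
      using IndS_Un_disjoint_GamP[OF sym R, of I] I by simp
    show "(-1) ^ (card (R \<union> I) - card R) * prod p (R \<union> I) = prod p R * ((-1) ^ card I * prod p I)"
      using disj fin[OF R] fin I by (simp add: card_Un_disjoint prod.union_disjoint)
  next
    fix I assume I: "I \<in> ?T"
    show "R \<union> (I - R) = I" using I by blast
    have "(I - R) \<inter> GamP F adj R = {}"
    proof (rule ccontr)
      assume "(I - R) \<inter> GamP F adj R \<noteq> {}"
      then obtain f g where "f \<in> R" "g \<in> I" "g \<notin> R" "adj f g"
        unfolding GamP_def Gam_def by blast
      then show False using I unfolding IndS_def indep_def by auto
    qed
    then show "I - R \<in> ?S"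
      using I by (auto simp: IndS_def indep_def)
  qed
  then show ?thesis
    by (simp add: qS_def sum_distrib_left)
qed

lemma qS_eq_prod_sum_GamP:
  fixes p :: "'a set \<Rightarrow> real"
  assumes F: "finite F" and sym: "\<forall>f\<in>F. \<forall>g\<in>F. adj f g \<longrightarrow> adj g f" and R: "R \<in> IndS adj F"
  shows "qS F adj p R = prod p R * (\<Sum>J\<in>IndS adj (GamP F adj R). qS F adj p J)"
proof -
  have "GamP F adj R \<subseteq> F" using R by (auto simp: GamP_def Gam_def IndS_def)
  then show ?thesis
    using qS_eq_prod_sum_disjoint[OF F sym R] sum_qS_IndS[OF F] by simp
qed

lemma chain_majorant_shearer:
  fixes p psi :: "'a set \<Rightarrow> real"
  assumes F: "finite F" and sym: "\<forall>f\<in>F. \<forall>g\<in>F. adj f g \<longrightarrow> adj g f"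
    and q: "\<forall>S. S \<subseteq> F \<longrightarrow> 0 \<le> qS F adj p S" and q_empty: "0 < qS F adj p {}"
    and psi: "\<forall>f\<in>F. 0 \<le> psi f \<and> psi f \<le> p f"
  shows "chain_majorant F adj psi (\<lambda>R. qS F adj p R / qS F adj p {})"
  unfolding chain_majorant_def
proof (intro conjI ballI)
  let ?M = "\<lambda>R. qS F adj p R / qS F adj p {}"
  show "?M {} = 1" using q_empty by simp
  show M_nonneg: "0 \<le> ?M J" if "J \<in> IndS adj F" for J
    using that q q_empty by (simp add: IndS_def)
  fix R assume R: "R \<in> IndS adj F"
  then have RF: "R \<subseteq> F" and GamP_F: "GamP F adj R \<subseteq> F"
    by (auto simp: IndS_def GamP_def Gam_def)
  have Ind_mono: "IndS adj (GamS F adj R) \<subseteq> IndS adj (GamP F adj R)"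
    by (rule IndS_mono) (auto simp: GamS_def GamP_def)
  have "prod psi R * (\<Sum>J\<in>IndS adj (GamS F adj R). ?M J)
      \<le> prod p R * (\<Sum>J\<in>IndS adj (GamP F adj R). ?M J)"
  proof (rule mult_mono)
    show "prod psi R \<le> prod p R" using RF psi by (intro prod_mono) auto
    show "(\<Sum>J\<in>IndS adj (GamS F adj R). ?M J) \<le> (\<Sum>J\<in>IndS adj (GamP F adj R). ?M J)"
    proof (rule sum_mono2[OF _ Ind_mono])
      show "finite (IndS adj (GamP F adj R))" using finite_subset[OF GamP_F F] by (rule finite_IndS)
    qed (use M_nonneg IndS_mono[OF GamP_F, of adj] in blast)
    show "0 \<le> prod p R" using RF psi by (intro prod_nonneg) force
    show "0 \<le> (\<Sum>J\<in>IndS adj (GamS F adj R). ?M J)"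
      using M_nonneg IndS_mono[where adj = adj, OF GamS_subset[of F adj R]] by (intro sum_nonneg) blast
  qed
  also have "\<dots> = ?M R"
    using qS_eq_prod_sum_GamP[OF F sym R, of p] by (simp add: sum_divide_distrib[symmetric])
  finally show "prod psi R * (\<Sum>J\<in>IndS adj (GamS F adj R). ?M J) \<le> ?M R" .
qed

section \<open>Stable words of walks\<close>

lemma lamW_concat:
  "\<forall>w\<in>set Ws. distinct w \<Longrightarrow> lamW lam (concat Ws) = chain_weight lam (map set Ws)"
  by (induction Ws) (simp_all add: lamW_def prod.distinct_set_conv_list)

lemma lamW_scale: "lamW (\<lambda>f. c * lam f) W = c ^ length W * lamW lam W"
  by (induction W) (simp_all add: lamW_def)

lemma charge_bound_nonneg:
  assumes S: "setting Omega F rho omega adj" and lam: "charge_bound Omega F rho omega lam"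
    and f: "f \<in> F"
  shows "0 \<le> lam f"
proof -
  have f_Omega: "f \<noteq> {}" "f \<subseteq> Omega" and omega: "\<forall>s\<in>Omega. 0 < omega s"
    using S f unfolding setting_def by simp_all
  have rho: "0 \<le> rho f s s'" if "s \<in> f" "s' \<in> Omega" for s s'
  proof -
    have "s \<in> Omega" using that(1) f_Omega(2) by blast
    then show ?thesis using S f that unfolding setting_def by blast
  qed
  obtain s' where s': "s' \<in> f" using f_Omega(1) by blast
  have "0 \<le> rho f s s' * omega s / omega s'" if "s \<in> f" for s
  proof -
    have "s \<in> Omega" "s' \<in> Omega" using that s' f_Omega(2) by auto
    then show ?thesis
      using rho[OF that] omega by (intro divide_nonneg_pos mult_nonneg_nonneg) (auto intro: less_imp_le)
  qed
  then have "0 \<le> (\<Sum>s \<in> {s \<in> f. s' \<in> Asupp Omega rho f s}. rho f s s' * omega s / omega s')"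
    by (intro sum_nonneg) simp
  also have "\<dots> \<le> lam f" using lam f s' f_Omega(2) unfolding charge_bound_def by blast
  finally show ?thesis .
qed

lemma sorted_blocks_eq:
  fixes perm :: "'b \<Rightarrow> nat"
  assumes perm: "inj_on perm F"
    and Vs: "\<forall>w\<in>set Vs. sorted_wrt (\<lambda>f g. perm f < perm g) w \<and> set w \<subseteq> F"
    and Ws: "\<forall>w\<in>set Ws. sorted_wrt (\<lambda>f g. perm f < perm g) w \<and> set w \<subseteq> F"
    and eq: "map set Vs = map set Ws"
  shows "Vs = Ws"
proof (rule list.inj_map_strong[OF _ eq])
  fix v w assume "v \<in> set Vs" "w \<in> set Ws" "set v = set w"
  then have "map perm v = map perm w"
    using Vs Ws by (intro strict_sorted_equal) (auto simp: sorted_wrt_map)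
  then show "v = w"
    using inj_on_subset[OF perm, of "set v \<union> set w"] \<open>v \<in> set Vs\<close> \<open>w \<in> set Ws\<close> Vs Ws
    by (simp add: inj_on_map_eq_map)
qed

lemma StabRt_empty:
  assumes S: "setting Omega F rho omega adj" and W: "W \<in> StabRt Omega F rho adj perm {} t"
  shows "W = [] \<and> t = 0"
proof -
  have "W = []"
  proof (rule ccontr)
    assume "W \<noteq> []"
    moreover have "W \<in> Stab Omega F rho adj perm" using W by (simp add: StabRt_def)
    ultimately obtain Ws where "stable_partition F adj Ws" "RW F adj W = set (hd Ws)"
      using Stab_stable_blocks[OF S] by metis
    then show False using W by (cases Ws) (auto simp: StabRt_def stable_partition_def)
  qed
  then show ?thesis using W by (simp add: StabRt_def)
qed

lemma StabRt_blocks: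
  assumes S: "setting Omega F rho omega adj"
    and W: "W \<in> StabRt Omega F rho adj perm R t" and R: "R \<noteq> {}"
  obtains Ws where "stable_partition F adj Ws" "concat Ws = W" "stable_blocks F adj W = Ws"
    "map set Ws = R # map set (tl Ws)" "\<forall>w\<in>set Ws. sorted_wrt (\<lambda>f g. perm f < perm g) w"
    "Gam_chain F adj R (map set (tl Ws))"
proof -
  have W_Stab: "W \<in> Stab Omega F rho adj perm" and RW: "RW F adj W = R"
    using W by (simp_all add: StabRt_def)
  then have "W \<noteq> []" using R by (auto simp: RW_def)
  then obtain Ws where Ws: "stable_partition F adj Ws" "concat Ws = W"
      "stable_blocks F adj W = Ws" "RW F adj W = set (hd Ws)"
      "\<forall>w\<in>set Ws. sorted_wrt (\<lambda>f g. perm f < perm g) w"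
      "Gam_chain F adj (set (hd Ws)) (map set (tl Ws))"
    using Stab_stable_blocks[OF S W_Stab] by metis
  moreover have "map set Ws = R # map set (tl Ws)"
    using Ws(1,4) RW by (cases Ws) (auto simp: stable_partition_def)
  ultimately show thesis using that RW by simp
qed

lemma StabRt_weight:
  assumes S: "setting Omega F rho omega adj" and theta: "theta \<noteq> 0"
    and W: "W \<in> StabRt Omega F rho adj perm R t" and R: "R \<noteq> {}"
  shows "lamW lam W = theta ^ length W *
      (prod (\<lambda>f. lam f / theta) R * chain_weight (\<lambda>f. lam f / theta) (map set (tl (stable_blocks F adj W))))"
proof -
  obtain Ws where Ws: "stable_partition F adj Ws" "concat Ws = W" "stable_blocks F adj W = Ws"
      "map set Ws = R # map set (tl Ws)"
    using StabRt_blocks[OF S W R] by metis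
  have "lamW lam W = lamW (\<lambda>f. theta * (lam f / theta)) (concat Ws)"
    using theta Ws(2) by simp
  also have "\<dots> = theta ^ length W * lamW (\<lambda>f. lam f / theta) (concat Ws)"
    by (simp only: lamW_scale Ws(2))
  also have "lamW (\<lambda>f. lam f / theta) (concat Ws) = chain_weight (\<lambda>f. lam f / theta) (map set Ws)"
    using Ws(1) by (intro lamW_concat) (simp add: stable_partition_def)
  finally show ?thesis using Ws(3,4) by simp
qed

lemma inj_on_StabRt_tail_blocks:
  assumes S: "setting Omega F rho omega adj" and perm: "inj_on perm F" and R: "R \<noteq> {}"
  shows "inj_on (\<lambda>W. map set (tl (stable_blocks F adj W))) (StabRt Omega F rho adj perm R t)"
proof (rule inj_onI)
  have blocks: "\<exists>Ws. concat Ws = W \<and> map set Ws = R # map set (tl (stable_blocks F adj W)) \<and>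
      (\<forall>w\<in>set Ws. sorted_wrt (\<lambda>f g. perm f < perm g) w \<and> set w \<subseteq> F)"
    if W: "W \<in> StabRt Omega F rho adj perm R t" for W
  proof -
    obtain Ws where Ws: "stable_partition F adj Ws" "concat Ws = W" "stable_blocks F adj W = Ws"
        "map set Ws = R # map set (tl Ws)" "\<forall>w\<in>set Ws. sorted_wrt (\<lambda>f g. perm f < perm g) w"
      using StabRt_blocks[OF S W R] by metis
    moreover have "\<forall>w\<in>set Ws. set w \<subseteq> F"
      using Ws(1) by (simp add: stable_partition_def IndS_def)
    ultimately show ?thesis by (intro exI[of _ Ws]) auto
  qed
  fix W V
  assume W: "W \<in> StabRt Omega F rho adj perm R t" and V: "V \<in> StabRt Omega F rho adj perm R t"
    and eq: "map set (tl (stable_blocks F adj W)) = map set (tl (stable_blocks F adj V))"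
  obtain Ws Vs where "concat Ws = W" "concat Vs = V" "map set Ws = map set Vs"
      "\<forall>w\<in>set Ws. sorted_wrt (\<lambda>f g. perm f < perm g) w \<and> set w \<subseteq> F"
      "\<forall>w\<in>set Vs. sorted_wrt (\<lambda>f g. perm f < perm g) w \<and> set w \<subseteq> F"
    using blocks[OF W] blocks[OF V] eq by metis
  then show "W = V" using sorted_blocks_eq[OF perm] by metis
qed

lemma StabRt_finite_sum_le:
  assumes S: "setting Omega F rho omega adj" and perm: "inj_on perm F"
    and theta: "0 < theta" "theta < 1" and lam: "\<forall>f\<in>F. 0 \<le> lam f"
    and M: "chain_majorant F adj (\<lambda>f. lam f / theta) mu" and R: "R \<in> IndS adj F"
    and A: "finite A" "A \<subseteq> StabRt Omega F rho adj perm R t"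
  shows "(\<Sum>W\<in>A. lamW lam W) \<le> mu R * theta ^ t"
proof (cases "R = {}")
  case True
  then have "A \<subseteq> {[]}" and "[] \<in> A \<Longrightarrow> t = 0"
    using StabRt_empty[OF S] A(2) by blast+
  moreover have "mu {} = 1" using M by (simp add: chain_majorant_def)
  ultimately show ?thesis
    using True theta by (cases "[] \<in> A") (auto simp: lamW_def subset_singleton_iff)
next
  case False
  let ?psi = "\<lambda>f. lam f / theta" and ?K = "\<lambda>W. map set (tl (stable_blocks F adj W))"
  have F: "finite F" using S by (simp add: setting_def)
  have psi: "\<forall>f\<in>F. 0 \<le> ?psi f" using lam theta by simp
  have psi_R: "0 \<le> prod ?psi R" using psi R by (intro prod_nonneg) (auto simp: IndS_def)
  have chain: "Gam_chain F adj R (?K W)" and length: "t \<le> length W"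
    and weight: "lamW lam W = theta ^ length W * (prod ?psi R * chain_weight ?psi (?K W))"
    if "W \<in> A" for W
  proof -
    have W: "W \<in> StabRt Omega F rho adj perm R t" using that A(2) by blast
    then show "t \<le> length W" by (simp add: StabRt_def)
    show "lamW lam W = theta ^ length W * (prod ?psi R * chain_weight ?psi (?K W))"
      using StabRt_weight[OF S _ W False] theta by simp
    obtain Ws where "stable_blocks F adj W = Ws" "Gam_chain F adj R (map set (tl Ws))"
      using StabRt_blocks[OF S W False] by metis
    then show "Gam_chain F adj R (?K W)" by simp
  qed
  have "(\<Sum>W\<in>A. lamW lam W) \<le> (\<Sum>W\<in>A. theta ^ t * (prod ?psi R * chain_weight ?psi (?K W)))"
  proof (rule sum_mono)
    fix W assume W: "W \<in> A"
    have "theta ^ length W \<le> theta ^ t"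
      using theta length[OF W] by (intro power_decreasing) auto
    moreover have "0 \<le> prod ?psi R * chain_weight ?psi (?K W)"
      using psi_R chain_weight_nonneg[OF psi chain[OF W]] by simp
    ultimately show "lamW lam W \<le> theta ^ t * (prod ?psi R * chain_weight ?psi (?K W))"
      unfolding weight[OF W] by (rule mult_right_mono)
  qed
  also have "\<dots> = theta ^ t * (prod ?psi R * (\<Sum>Js\<in>?K ` A. chain_weight ?psi Js))"
    using inj_on_subset[OF inj_on_StabRt_tail_blocks[OF S perm False] A(2)]
    by (simp add: sum_distrib_left sum.reindex)
  also have "\<dots> \<le> theta ^ t * mu R"
  proof -
    have "(\<Sum>Js\<in>?K ` A. chain_weight ?psi Js) \<le> (\<Sum>J\<in>IndS adj (GamS F adj R). mu J)"
      using chain A(1) by (intro chain_weight_sum_le_sum_IndS[OF F psi M]) auto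
    then have "prod ?psi R * (\<Sum>Js\<in>?K ` A. chain_weight ?psi Js) \<le> mu R"
      using M R psi_R unfolding chain_majorant_def by (meson mult_left_mono order_trans)
    then show ?thesis using theta by simp
  qed
  finally show ?thesis by (simp add: mult.commute)
qed

lemma StabRt_summable_le:
  assumes S: "setting Omega F rho omega adj" and perm: "inj_on perm F"
    and theta: "0 < theta" "theta < 1" and lam: "\<forall>f\<in>F. 0 \<le> lam f"
    and M: "chain_majorant F adj (\<lambda>f. lam f / theta) mu" and R: "R \<in> IndS adj F"
  shows "lamW lam summable_on StabRt Omega F rho adj perm R t"
    and "(\<Sum>\<^sub>\<infinity>W\<in>StabRt Omega F rho adj perm R t. lamW lam W) \<le> mu R * theta ^ t"
proof -
  let ?A = "StabRt Omega F rho adj perm R t"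
  have bound: "sum (lamW lam) A \<le> mu R * theta ^ t" if "finite A" "A \<subseteq> ?A" for A
    using StabRt_finite_sum_le[OF S perm theta lam M R that] .
  have "0 \<le> lamW lam W" if W: "W \<in> ?A" for W
  proof -
    have "set W \<subseteq> F"
    proof (cases "W = []")
      case False
      then obtain Ws where "stable_partition F adj Ws" "concat Ws = W"
        using W unfolding StabRt_def Stab_def pi_stable_word_def by blast
      then have "\<forall>w\<in>set Ws. set w \<subseteq> F" by (simp add: stable_partition_def IndS_def)
      then show ?thesis using \<open>concat Ws = W\<close> by force
    qed simp
    then show ?thesis using lam unfolding lamW_def by (intro prod_list_nonneg) auto
  qed
  then show summable: "lamW lam summable_on ?A"
    using bound
    by (intro nonneg_bounded_partial_sums_imp_summable_on[where C = "mu R * theta ^ t"]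
        eventually_finite_subsets_at_top_weakI) auto
  show "(\<Sum>\<^sub>\<infinity>W\<in>?A. lamW lam W) \<le> mu R * theta ^ t"
    using summable bound by (rule infsum_le_finite_sums)
qed

theorem theorem3:
  fixes Omega :: "'a set" and F :: "'a set set"
    and rho :: "'a set \<Rightarrow> 'a \<Rightarrow> 'a \<Rightarrow> real" and omega :: "'a \<Rightarrow> real"
    and adj :: "'a set \<Rightarrow> 'a set \<Rightarrow> bool" and perm :: "'a set \<Rightarrow> nat"
    and lam :: "'a set \<Rightarrow> real" and mu :: "'a set set \<Rightarrow> real" and theta :: real
  assumes "setting Omega F rho omega adj"
    and "bij_betw perm F {..<card F}"
    and "(\<exists>m :: 'a set \<Rightarrow> real.
            charge_bound Omega F rho omega lam \<and> 0 < theta \<and> theta < 1 \<and>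
            (\<forall>f\<in>F. m f > 0) \<and>
            (\<forall>f\<in>F. lam f / m f * (\<Sum>S \<in> IndS adj (Gam F adj f). \<Prod>g\<in>S. m g) \<le> theta) \<and>
            mu = (\<lambda>R. \<Prod>g\<in>R. m g))
       \<or> (\<exists>p. shearer Omega F rho omega adj p lam theta \<and>
            mu = (\<lambda>R. qS F adj p R / qS F adj p {}))"
  shows "\<forall>R \<in> IndS adj F. \<forall>t::nat.
           (lamW lam) summable_on (StabRt Omega F rho adj perm R t) \<and>
           (\<Sum>\<^sub>\<infinity>W \<in> StabRt Omega F rho adj perm R t. lamW lam W) \<le> mu R * theta ^ t"
proof -
  note S = assms(1)
  have F: "finite F" and sym: "\<forall>f\<in>F. \<forall>g\<in>F. adj f g \<longrightarrow> adj g f"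
    using S by (simp_all add: setting_def)
  have perm: "inj_on perm F" using assms(2) by (rule bij_betw_imp_inj_on)
  have "0 < theta \<and> theta < 1 \<and> (\<forall>f\<in>F. 0 \<le> lam f) \<and> chain_majorant F adj (\<lambda>f. lam f / theta) mu"
    using assms(3)
  proof (elim disjE exE conjE)
    fix m :: "'a set \<Rightarrow> real"
    assume lam: "charge_bound Omega F rho omega lam" and theta: "0 < theta" "theta < 1"
      and m: "\<forall>f\<in>F. 0 < m f"
      and local_bound: "\<forall>f\<in>F. lam f / m f * (\<Sum>S\<in>IndS adj (Gam F adj f). \<Prod>g\<in>S. m g) \<le> theta"
      and mu: "mu = (\<lambda>R. \<Prod>g\<in>R. m g)"
    have "\<forall>f\<in>F. lam f / theta * (\<Sum>S\<in>IndS adj (Gam F adj f). prod m S) \<le> m f"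
      using local_bound m theta by (auto simp: field_simps)
    then show ?thesis
      using chain_majorant_prod[OF F m] charge_bound_nonneg[OF S lam] theta mu by simp
  next
    fix p
    assume "shearer Omega F rho omega adj p lam theta" and mu: "mu = (\<lambda>R. qS F adj p R / qS F adj p {})"
    then have q: "\<forall>S. S \<subseteq> F \<longrightarrow> 0 \<le> qS F adj p S" "0 < qS F adj p {}"
      and lam: "charge_bound Omega F rho omega lam" and theta: "0 < theta" "theta < 1"
      and lam_p: "\<forall>f\<in>F. lam f \<le> theta * p f"
      by (simp_all add: shearer_def)
    have "\<forall>f\<in>F. 0 \<le> lam f / theta \<and> lam f / theta \<le> p f"
      using charge_bound_nonneg[OF S lam] lam_p theta by (auto simp: field_simps)
    then show ?thesis
      using chain_majorant_shearer[OF F sym q] charge_bound_nonneg[OF S lam] theta mu by simp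
  qed
  then show ?thesis
    using StabRt_summable_le[OF S perm] by blast
qed

end
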